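(* Let $\mathcal{A}=(T(\Sigma,X),\Rightarrow_\Pi)$ be an abstract reduction system closed under substitutions, and let $(u_1\Rightarrow_{w_1}v_1,\ u_2\Rightarrow_{w_2}v_2)$ be a recurrent pair in $\mathcal{A}$, with $c_1,c_2,x,y,s,t,n_1,n_2,n_3,n_4$ as in the definition of recurrent pair. Then for all $m,n\in\mathbb{N}$ with $n\ge n_2$, the term $c_1[m,n]$ starts an infinite $(\Rightarrow_{w_1}^{*}\circ\Rightarrow_{w_2})$-chain, i.e. there is an infinite sequence $a_0=c_1[m,n],a_1,a_2,\dots$ of terms with $a_k\ (\Rightarrow_{w_1}^{*}\circ\Rightarrow_{w_2})\ a_{k+1}$ for all $k\in\mathbb{N}$.
   Context: Fix a signature $\Sigma$, a countably infinite set $X$ of variables disjoint from $\Sigma$, and two distinct fresh hole constants $\square,\square'\notin\Sigma\cup X$. Terms are elements of $T(\Sigma,X)$; substitutions $\theta$ (maps $X\to T(\Sigma,X)$ moving finitely many variables) act homomorphically; $\mathit{Var}$ denotes the variable set. An abstract reduction system $(A,\Rightarrow_\Pi)$ has $\Rightarrow_\Pi=\bigcup_{\pi\in\Pi}\Rightarrow_\pi$; for $w=\langle\pi_1,\dots,\pi_k\rangle\in\Pi^*$, $\Rightarrow_w=\Rightarrow_{\pi_1}\circ\cdots\circ\Rightarrow_{\pi_k}$ ($\Rightarrow_\epsilon$ the identity), where $\phi\circ\varphi=\{(a,a'')\mid\exists a_1,(a,a_1)\in\phi,(a_1,a'')\in\varphi\}$; $\Rightarrow_w^*$ is the reflexive-transitive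 closure of $\Rightarrow_w$. It is closed under substitutions if for all $s,t\in A$, $w\in\Pi^*$ and substitutions $\theta$, $s\Rightarrow_w t$ implies $s\theta\Rightarrow_w t\theta$. Let $c_1$ be a term over $\Sigma\cup\{\square,\square'\}$ and $X$ containing at least one occurrence of $\square$ and of $\square'$, and $c_1[t,t']$ the result of replacing all $\square$ by $t$ and all $\square'$ by $t'$. Let $c_2$ be a term over $\Sigma\cup\{\square\}$ and $X$ containing at least one $\square$ (and no $\square'$), $c_2[t]$ the result of replacing all $\square$ by $t$, $c_2^0[t]=t$, $c_2^{k+1}[t]=c_2[c_2^k[t]]$. A recurrent pair in $\mathcal{A}$ is a pair of chains $u_1\Rightarrow_{w_1}v_1$ and $u_2\Rightarrow_{w_2}v_2$ ($w_1,w_2\in\Pi^*$) such that: $u_1=c_1[x,c_2[y]]$, $v_1=c_1[c_2^{n_1}[x],y]$, $u_2=c_1[x,c_2^{n_2}[s]]$, $v_2=c_1[c_2^{n_3}[t],c_2^{n_4}[x]]$ for variables $x\neq y$ with $\{x,y\}\cap\mathit{Var}(c_1)=\emptyset$, a term $s$, naturals $n_1,n_2,n_3,n_4$; $\mathit{Var}(c_2)=\mathit{Var}(s)=\emptyset$; $t\in\{x,s\}$; and $n_4\ge n_2$. For $m,n\in\mathbb{N}$, $c_1[m,n]$ denotes the term $c_1[c_2^m[s],c_2^n[s]]$. *)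

theory Defs
  imports Main "HOL-Library.Countable_Set"
begin

datatype ('f, 'v) "term" = Var 'v | Fun 'f "('f, 'v) term list"

fun vars_term :: "('f, 'v) term \<Rightarrow> 'v set" where
  "vars_term (Var x) = {x}"
| "vars_term (Fun f ts) = (\<Union>t \<in> set ts. vars_term t)"

fun subst_apply :: "('f, 'v) term \<Rightarrow> ('v \<Rightarrow> ('f, 'v) term) \<Rightarrow> ('f, 'v) term" where
  "subst_apply (Var x) \<theta> = \<theta> x"
| "subst_apply (Fun f ts) \<theta> = Fun f (map (\<lambda>t. subst_apply t \<theta>) ts)"

definition is_subst :: "('v \<Rightarrow> ('f, 'v) term) \<Rightarrow> bool" where
  "is_subst \<theta> \<longleftrightarrow> finite {x. \<theta> x \<noteq> Var x}"

(* Terms over Sigma \<union> {hole, hole'} and X: two distinct fresh hole constants *)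
datatype ('f, 'v) ctxt = CVar 'v | CFun 'f "('f, 'v) ctxt list" | Hole | Hole'

fun vars_ctxt :: "('f, 'v) ctxt \<Rightarrow> 'v set" where
  "vars_ctxt (CVar x) = {x}"
| "vars_ctxt (CFun f cs) = (\<Union>c \<in> set cs. vars_ctxt c)"
| "vars_ctxt Hole = {}"
| "vars_ctxt Hole' = {}"

fun has_hole :: "('f, 'v) ctxt \<Rightarrow> bool" where
  "has_hole (CVar x) = False"
| "has_hole (CFun f cs) = (\<exists>c \<in> set cs. has_hole c)"
| "has_hole Hole = True"
| "has_hole Hole' = False"

fun has_hole' :: "('f, 'v) ctxt \<Rightarrow> bool" where
  "has_hole' (CVar x) = False"
| "has_hole' (CFun f cs) = (\<exists>c \<in> set cs. has_hole' c)"
| "has_hole' Hole = False"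
| "has_hole' Hole' = True"

fun fill2 :: "('f, 'v) ctxt \<Rightarrow> ('f, 'v) term \<Rightarrow> ('f, 'v) term \<Rightarrow> ('f, 'v) term" where
  "fill2 (CVar x) t t' = Var x"
| "fill2 (CFun f cs) t t' = Fun f (map (\<lambda>c. fill2 c t t') cs)"
| "fill2 Hole t t' = t"
| "fill2 Hole' t t' = t'"

definition fill1 :: "('f, 'v) ctxt \<Rightarrow> ('f, 'v) term \<Rightarrow> ('f, 'v) term" where
  "fill1 c t = fill2 c t t"

fun fill_pow :: "('f, 'v) ctxt \<Rightarrow> nat \<Rightarrow> ('f, 'v) term \<Rightarrow> ('f, 'v) term" where
  "fill_pow c 0 t = t"
| "fill_pow c (Suc k) t = fill1 c (fill_pow c k t)"

(* Abstract reduction system (T(Sigma,X), \<Rightarrow>_Pi) given by R :: 'p \<Rightarrow> relation, Pi = UNIV :: 'p set.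
   \<Rightarrow>_w for a word w = <pi_1,...,pi_k> *)
fun rel_word :: "('p \<Rightarrow> (('f, 'v) term \<times> ('f, 'v) term) set) \<Rightarrow> 'p list
                   \<Rightarrow> (('f, 'v) term \<times> ('f, 'v) term) set" where
  "rel_word R [] = Id"
| "rel_word R (p # w) = R p O rel_word R w"

definition closed_under_subst :: "('p \<Rightarrow> (('f, 'v) term \<times> ('f, 'v) term) set) \<Rightarrow> bool" where
  "closed_under_subst R \<longleftrightarrow>
     (\<forall>s t w \<theta>. is_subst \<theta> \<longrightarrow> (s, t) \<in> rel_word R w \<longrightarrow>
        (subst_apply s \<theta>, subst_apply t \<theta>) \<in> rel_word R w)"

definition recurrent_pair ::
  "('p \<Rightarrow> (('f, 'v) term \<times> ('f, 'v) term) set) \<Rightarrow> 'p list \<Rightarrow> 'p list \<Rightarrow>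
   ('f, 'v) ctxt \<Rightarrow> ('f, 'v) ctxt \<Rightarrow> 'v \<Rightarrow> 'v \<Rightarrow> ('f, 'v) term \<Rightarrow> ('f, 'v) term \<Rightarrow>
   nat \<Rightarrow> nat \<Rightarrow> nat \<Rightarrow> nat \<Rightarrow> bool" where
  "recurrent_pair R w1 w2 c1 c2 x y s t n1 n2 n3 n4 \<longleftrightarrow>
     has_hole c1 \<and> has_hole' c1 \<and> has_hole c2 \<and> \<not> has_hole' c2 \<and>
     x \<noteq> y \<and> x \<notin> vars_ctxt c1 \<and> y \<notin> vars_ctxt c1 \<and>
     vars_ctxt c2 = {} \<and> vars_term s = {} \<and> t \<in> {Var x, s} \<and> n4 \<ge> n2 \<and>
     (fill2 c1 (Var x) (fill1 c2 (Var y)), fill2 c1 (fill_pow c2 n1 (Var x)) (Var y))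
        \<in> rel_word R w1 \<and>
     (fill2 c1 (Var x) (fill_pow c2 n2 s), fill2 c1 (fill_pow c2 n3 t) (fill_pow c2 n4 (Var x)))
        \<in> rel_word R w2"

definition c1_mn :: "('f, 'v) ctxt \<Rightarrow> ('f, 'v) ctxt \<Rightarrow> ('f, 'v) term \<Rightarrow> nat \<Rightarrow> nat \<Rightarrow> ('f, 'v) term" where
  "c1_mn c1 c2 s m n = fill2 c1 (fill_pow c2 m s) (fill_pow c2 n s)"

end

theory Submission
  imports Defs
begin

text \<open>Because c2 and s are ground, instantiating the two rules of a recurrent pair at
  terms c2^k[s] yields steps between terms of the shape c1[m, n]. With x := c2^m[s] and
  y := c2^n[s] the w1-rule rewrites c1[m, n+1] to c1[n1+m, n], so iterating it lowers the second
  index to n2. There the w2-rule with x := c2^M[s] produces some c1[M', n4+M], and n4+M \<ge> n2, so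
  the argument repeats forever.\<close>

lemma subst_apply_ground: "vars_term s = {} \<Longrightarrow> subst_apply s \<theta> = s"
  by (induction s) (auto simp: map_idI)

lemma subst_apply_fill2:
  "\<forall>z\<in>vars_ctxt c. \<theta> z = Var z \<Longrightarrow>
   subst_apply (fill2 c u v) \<theta> = fill2 c (subst_apply u \<theta>) (subst_apply v \<theta>)"
  by (induction c) auto

lemma subst_apply_fill_pow:
  "vars_ctxt c = {} \<Longrightarrow> subst_apply (fill_pow c k u) \<theta> = fill_pow c k (subst_apply u \<theta>)"
  by (induction k) (auto simp: fill1_def subst_apply_fill2)

lemma fill_pow_add: "fill_pow c (a + b) u = fill_pow c a (fill_pow c b u)"
  by (induction a) auto

lemma is_subst_Var: "is_subst Var"
  by (simp add: is_subst_def)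

lemma is_subst_fun_upd: "is_subst \<theta> \<Longrightarrow> is_subst (\<theta>(x := u))"
proof -
  assume "is_subst \<theta>"
  moreover have "{z. (\<theta>(x := u)) z \<noteq> Var z} \<subseteq> insert x {z. \<theta> z \<noteq> Var z}" by auto
  ultimately show ?thesis unfolding is_subst_def by (meson finite_insert finite_subset)
qed

lemma closed_under_substD:
  "closed_under_subst R \<Longrightarrow> is_subst \<theta> \<Longrightarrow> (u, v) \<in> rel_word R w \<Longrightarrow>
   (subst_apply u \<theta>, subst_apply v \<theta>) \<in> rel_word R w"
  unfolding closed_under_subst_def by blast

lemma infinite_chain_from_invariant:
  assumes "I a" and step: "\<And>a. I a \<Longrightarrow> \<exists>b. I b \<and> (a, b) \<in> r"
  shows "\<exists>f. f 0 = a \<and> (\<forall>k. (f k, f (Suc k)) \<in> r)"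
proof -
  obtain g where g: "\<And>a. I a \<Longrightarrow> I (g a) \<and> (a, g a) \<in> r"
    using step by metis
  define f where "f k = (g ^^ k) a" for k
  have "I (f k)" for k
    by (induction k) (use \<open>I a\<close> g in \<open>auto simp: f_def\<close>)
  then have "(f k, f (Suc k)) \<in> r" for k
    using g by (simp add: f_def)
  moreover have "f 0 = a" by (simp add: f_def)
  ultimately show ?thesis by blast
qed

locale closed_recurrent_pair =
  fixes R :: "'p \<Rightarrow> (('f, 'v) term \<times> ('f, 'v) term) set"
    and w1 w2 :: "'p list"
    and c1 c2 :: "('f, 'v) ctxt"
    and x y :: 'v
    and s t :: "('f, 'v) term"
    and n1 n2 n3 n4 :: nat
  assumes closed: "closed_under_subst R"
    and recurrent: "recurrent_pair R w1 w2 c1 c2 x y s t n1 n2 n3 n4"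
begin

lemma w1_rule: "(fill2 c1 (Var x) (fill1 c2 (Var y)), fill2 c1 (fill_pow c2 n1 (Var x)) (Var y))
    \<in> rel_word R w1"
  and w2_rule: "(fill2 c1 (Var x) (fill_pow c2 n2 s),
      fill2 c1 (fill_pow c2 n3 t) (fill_pow c2 n4 (Var x))) \<in> rel_word R w2"
  and x_neq_y: "x \<noteq> y"
  and x_notin_c1: "x \<notin> vars_ctxt c1" and y_notin_c1: "y \<notin> vars_ctxt c1"
  and c2_ground: "vars_ctxt c2 = {}" and s_ground: "vars_term s = {}"
  and t_cases: "t \<in> {Var x, s}" and n2_le_n4: "n2 \<le> n4"
  using recurrent unfolding recurrent_pair_def by auto

lemma w1_step: "(c1_mn c1 c2 s m (Suc n), c1_mn c1 c2 s (n1 + m) n) \<in> rel_word R w1"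
proof -
  define \<theta> where "\<theta> = (Var(x := fill_pow c2 m s))(y := fill_pow c2 n s)"
  have c1_fixed: "\<forall>z\<in>vars_ctxt c1. \<theta> z = Var z"
    using x_notin_c1 y_notin_c1 by (auto simp: \<theta>_def)
  have \<theta>_x: "\<theta> x = fill_pow c2 m s" and \<theta>_y: "\<theta> y = fill_pow c2 n s"
    using x_neq_y by (auto simp: \<theta>_def)
  have "subst_apply (fill1 c2 (Var y)) \<theta> = fill_pow c2 (Suc n) s"
    using subst_apply_fill2[of c2] c2_ground by (simp add: fill1_def \<theta>_y)
  then have lhs: "subst_apply (fill2 c1 (Var x) (fill1 c2 (Var y))) \<theta> = c1_mn c1 c2 s m (Suc n)"
    by (simp add: subst_apply_fill2[OF c1_fixed] \<theta>_x c1_mn_def)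
  have rhs: "subst_apply (fill2 c1 (fill_pow c2 n1 (Var x)) (Var y)) \<theta> = c1_mn c1 c2 s (n1 + m) n"
    by (simp add: subst_apply_fill2[OF c1_fixed] subst_apply_fill_pow[OF c2_ground]
        fill_pow_add \<theta>_x \<theta>_y c1_mn_def)
  have "is_subst \<theta>"
    unfolding \<theta>_def by (intro is_subst_fun_upd is_subst_Var)
  from closed_under_substD[OF closed this w1_rule] show ?thesis
    by (simp only: lhs rhs)
qed

lemma w1_steps: "(c1_mn c1 c2 s m (k + n), c1_mn c1 c2 s (n1 * k + m) n) \<in> (rel_word R w1)\<^sup>*"
proof (induction k arbitrary: m)
  case 0
  then show ?case by simp
next
  case (Suc k)
  have "(c1_mn c1 c2 s m (Suc k + n), c1_mn c1 c2 s (n1 + m) (k + n)) \<in> rel_word R w1"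
    using w1_step by simp
  moreover have "(c1_mn c1 c2 s (n1 + m) (k + n), c1_mn c1 c2 s (n1 * Suc k + m) n)
      \<in> (rel_word R w1)\<^sup>*"
    using Suc.IH[of "n1 + m"] by (simp add: algebra_simps)
  ultimately show ?case by (rule converse_rtrancl_into_rtrancl)
qed

lemma w2_step: "\<exists>m'. (c1_mn c1 c2 s m n2, c1_mn c1 c2 s m' (n4 + m)) \<in> rel_word R w2"
proof -
  define \<theta> where "\<theta> = Var(x := fill_pow c2 m s)"
  have c1_fixed: "\<forall>z\<in>vars_ctxt c1. \<theta> z = Var z"
    using x_notin_c1 by (auto simp: \<theta>_def)
  have \<theta>_x: "\<theta> x = fill_pow c2 m s"
    by (simp add: \<theta>_def)
  define m' where "m' = (if t = Var x then n3 + m else n3)"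
  have "subst_apply (fill_pow c2 n3 t) \<theta> = fill_pow c2 m' s"
    using t_cases by (auto simp: subst_apply_fill_pow[OF c2_ground] subst_apply_ground[OF s_ground]
        fill_pow_add \<theta>_def m'_def)
  then have rhs: "subst_apply (fill2 c1 (fill_pow c2 n3 t) (fill_pow c2 n4 (Var x))) \<theta>
      = c1_mn c1 c2 s m' (n4 + m)"
    by (simp add: subst_apply_fill2[OF c1_fixed] subst_apply_fill_pow[OF c2_ground]
        fill_pow_add[symmetric] \<theta>_x c1_mn_def)
  have lhs: "subst_apply (fill2 c1 (Var x) (fill_pow c2 n2 s)) \<theta> = c1_mn c1 c2 s m n2"
    by (simp add: subst_apply_fill2[OF c1_fixed] subst_apply_ground[OF s_ground]
        subst_apply_fill_pow[OF c2_ground] \<theta>_x c1_mn_def)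
  have "is_subst \<theta>"
    unfolding \<theta>_def by (intro is_subst_fun_upd is_subst_Var)
  from closed_under_substD[OF closed this w2_rule] show ?thesis
    unfolding lhs rhs by blast
qed

lemma chain_step:
  assumes "n2 \<le> n"
  shows "\<exists>m' n'. n2 \<le> n' \<and>
    (c1_mn c1 c2 s m n, c1_mn c1 c2 s m' n') \<in> (rel_word R w1)\<^sup>* O rel_word R w2"
proof -
  define M where "M = n1 * (n - n2) + m"
  have "(c1_mn c1 c2 s m n, c1_mn c1 c2 s M n2) \<in> (rel_word R w1)\<^sup>*"
    using w1_steps[of m "n - n2" n2] assms by (simp add: M_def)
  moreover obtain m' where "(c1_mn c1 c2 s M n2, c1_mn c1 c2 s m' (n4 + M)) \<in> rel_word R w2"
    using w2_step by blast
  moreover have "n2 \<le> n4 + M"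
    using n2_le_n4 by simp
  ultimately show ?thesis by blast
qed

end

theorem corollary13:
  fixes R :: "'p \<Rightarrow> (('f, 'v) term \<times> ('f, 'v) term) set"
    and w1 w2 :: "'p list"
    and c1 c2 :: "('f, 'v) ctxt"
    and x y :: 'v
    and s t :: "('f, 'v) term"
    and n1 n2 n3 n4 m n :: nat
  assumes "countable (UNIV :: 'v set)" and "infinite (UNIV :: 'v set)"
    and "closed_under_subst R"
    and "recurrent_pair R w1 w2 c1 c2 x y s t n1 n2 n3 n4"
    and "n \<ge> n2"
  shows "\<exists>a :: nat \<Rightarrow> ('f, 'v) term. a 0 = c1_mn c1 c2 s m n \<and>
           (\<forall>k. (a k, a (Suc k)) \<in> (rel_word R w1)\<^sup>* O rel_word R w2)"
proof -
  interpret closed_recurrent_pair R w1 w2 c1 c2 x y s t n1 n2 n3 n4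
    using assms(3,4) by unfold_locales
  show ?thesis
  proof (rule infinite_chain_from_invariant)
    let ?I = "\<lambda>a. \<exists>m n. n2 \<le> n \<and> a = c1_mn c1 c2 s m n"
    show "?I (c1_mn c1 c2 s m n)"
      using assms(5) by blast
    show "\<exists>b. ?I b \<and> (a, b) \<in> (rel_word R w1)\<^sup>* O rel_word R w2" if "?I a" for a
      using that chain_step by blast
  qed
qed

end
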